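(* The function $q\mapsto (p(q)-c)\big(1-F(p(q)/q)\big)$ is strictly increasing on $Q$.
   Context: Let $0<q_\ell<q_h<\infty$, $Q=[q_\ell,q_h]$, and let $c$ be a real number with $0<c<q_\ell$. Let $F$ be a probability distribution on $[0,1]$ with support $[0,1]$ admitting a twice continuously differentiable density $f:(0,1)\to\mathbb{R}_{>0}$. Define $r(v)=(1-F(v))/f(v)$ and $\psi(v)=v-r(v)$ on $(0,1)$, and assume $\psi'(v)>0$ whenever $\psi(v)>0$. For $q\in Q$, $p(q)$ is the unique maximizer over $p\in\mathbb{R}$ of $(p-c)\big(1-F(p/q)\big)$. *)

theory Defs
  imports "HOL-Analysis.Analysis"
begin

definition is_cdf_with_density :: "(real \<Rightarrow> real) \<Rightarrow> (real \<Rightarrow> real) \<Rightarrow> bool" where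
  "is_cdf_with_density F f \<longleftrightarrow>
     (\<forall>x. x \<le> 0 \<longrightarrow> F x = 0) \<and> (\<forall>x. x \<ge> 1 \<longrightarrow> F x = 1) \<and>
     continuous_on {0..1} F \<and>
     (\<forall>v\<in>{0<..<1}. (F has_real_derivative f v) (at v)) \<and>
     (\<forall>v\<in>{0<..<1}. f v > 0)"

definition C2_on_open :: "(real \<Rightarrow> real) \<Rightarrow> real set \<Rightarrow> bool" where
  "C2_on_open f S \<longleftrightarrow> (\<exists>f1 f2.
     (\<forall>v\<in>S. (f has_real_derivative f1 v) (at v)) \<and>
     (\<forall>v\<in>S. (f1 has_real_derivative f2 v) (at v)) \<and>
     continuous_on S f2)"

definition hazard_inv :: "(real \<Rightarrow> real) \<Rightarrow> (real \<Rightarrow> real) \<Rightarrow> real \<Rightarrow> real" where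
  "hazard_inv F f v = (1 - F v) / f v"

definition virt_val :: "(real \<Rightarrow> real) \<Rightarrow> (real \<Rightarrow> real) \<Rightarrow> real \<Rightarrow> real" where
  "virt_val F f v = v - hazard_inv F f v"

definition profit :: "(real \<Rightarrow> real) \<Rightarrow> real \<Rightarrow> real \<Rightarrow> real \<Rightarrow> real" where
  "profit F c q p = (p - c) * (1 - F (p / q))"

definition opt_price :: "(real \<Rightarrow> real) \<Rightarrow> real \<Rightarrow> real \<Rightarrow> real" where
  "opt_price F c q = (THE p. \<forall>p'. p' \<noteq> p \<longrightarrow> profit F c q p' < profit F c q p)"

end

theory Submission
  imports Defs
begin

text \<open>If p is optimal for q, then at a larger q' the price p q'/q sells with the same
probability 1 - F(p/q) but at a higher margin, so the optimal profit at q' is larger.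
The real work is showing that p(q) is well defined: the profit is positive exactly on
(c, q), so it has a maximizer there; every maximizer p satisfies the first-order condition
\<psi>(p/q) = c/q, and since \<psi>' > 0 wherever \<psi> > 0, \<psi> attains the positive level
c/q at most once.\<close>

text \<open>If a < b, then g exceeds k just to the right of a, so its maximum on [a, b] lies
strictly inside and above level k, where g' would have to be both zero and positive.\<close>

lemma level_attained_once:
  fixes g g' :: "real \<Rightarrow> real"
  assumes deriv: "\<And>x. x \<in> {a..b} \<Longrightarrow> (g has_real_derivative g' x) (at x)"
    and deriv_pos: "\<And>x. x \<in> {a..b} \<Longrightarrow> g x \<ge> k \<Longrightarrow> g' x > 0"
    and "a \<le> b" and ga: "g a = k" and gb: "g b = k"
  shows "a = b"
proof (rule ccontr)
  assume "a \<noteq> b"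
  with \<open>a \<le> b\<close> have "a < b" by simp
  have a: "a \<in> {a..b}" using \<open>a \<le> b\<close> by simp
  obtain d where "d > 0" and d: "\<forall>h>0. h < d \<longrightarrow> g a < g (a + h)"
    using DERIV_pos_inc_right[OF deriv[OF a] deriv_pos[OF a]] ga by auto
  define h where "h = min (d/2) (b - a)"
  have h: "0 < h" "h < d" "a + h \<le> b"
    using \<open>d > 0\<close> \<open>a < b\<close> by (auto simp: h_def min_def)
  have cont: "continuous_on {a..b} g"
    using deriv by (meson DERIV_isCont continuous_at_imp_continuous_on)
  obtain M where M: "M \<in> {a..b}" and M_max: "\<forall>y\<in>{a..b}. g y \<le> g M"
    using continuous_attains_sup[OF compact_Icc _ cont] \<open>a < b\<close> by auto
  have "g M > k"
    using M_max[rule_format, of "a + h"] d h ga by auto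
  with M ga gb have M_inner: "a < M" "M < b"
    by (auto simp: order.order_iff_strict)
  have "g' M = 0"
  proof (rule DERIV_local_max[OF deriv[OF M], of "min (M - a) (b - M)"])
    show "0 < min (M - a) (b - M)" using M_inner by simp
    show "\<forall>y. \<bar>M - y\<bar> < min (M - a) (b - M) \<longrightarrow> g y \<le> g M"
      using M_max by (auto simp: abs_if)
  qed
  moreover have "g' M > 0" using deriv_pos[OF M] \<open>g M > k\<close> by simp
  ultimately show False by simp
qed

lemma cdf_less_one:
  assumes cdf: "is_cdf_with_density F f" and "x < 1"
  shows "F x < 1"
proof (cases "x \<le> 0")
  case True
  then show ?thesis using cdf by (simp add: is_cdf_with_density_def)
next
  case False
  have "F x < F 1"
  proof (rule DERIV_pos_imp_increasing_open[OF \<open>x < 1\<close>])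
    fix y assume "x < y" "y < 1"
    then show "\<exists>d. DERIV F y :> d \<and> d > 0"
      using cdf False by (intro exI[of _ "f y"]) (auto simp: is_cdf_with_density_def)
  next
    show "continuous_on {x..1} F"
      using cdf False by (auto simp: is_cdf_with_density_def intro: continuous_on_subset)
  qed
  then show ?thesis using cdf by (simp add: is_cdf_with_density_def)
qed

lemma cdf_le_one:
  assumes "is_cdf_with_density F f"
  shows "F x \<le> 1"
  using cdf_less_one[OF assms, of x] assms
  by (cases "x < 1") (auto simp: is_cdf_with_density_def)

lemma profit_pos_iff:
  assumes cdf: "is_cdf_with_density F f" and "q > 0"
  shows "profit F c q p > 0 \<longleftrightarrow> c < p \<and> p < q"
proof (cases "c < p \<and> p < q")
  case True
  then have "F (p/q) < 1" using cdf_less_one[OF cdf] \<open>q > 0\<close> by simp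
  with True show ?thesis by (simp add: profit_def)
next
  case False
  then consider "p \<le> c" | "p \<ge> q" by linarith
  then have "profit F c q p \<le> 0"
  proof cases
    case 1
    then show ?thesis
      using cdf_le_one[OF cdf] by (simp add: profit_def mult_nonpos_nonneg)
  next
    case 2
    then have "F (p/q) = 1" using cdf \<open>q > 0\<close> by (simp add: is_cdf_with_density_def)
    then show ?thesis by (simp add: profit_def)
  qed
  with False show ?thesis by simp
qed

lemma profit_attains_max:
  assumes cdf: "is_cdf_with_density F f" and "0 < c" "c < q"
  obtains p where "\<forall>p'. profit F c q p' \<le> profit F c q p"
proof -
  have "continuous_on {0..1} F" using cdf by (simp add: is_cdf_with_density_def)
  moreover have "continuous_on {c..q} (\<lambda>p. p / q)" using assms by (intro continuous_intros) auto
  moreover have "(\<lambda>p. p / q) ` {c..q} \<subseteq> {0..1}" using assms by auto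
  ultimately have "continuous_on {c..q} (\<lambda>p. F (p / q))"
    by (rule continuous_on_compose2)
  then have cont: "continuous_on {c..q} (profit F c q)"
    unfolding profit_def[abs_def] by (intro continuous_intros)
  obtain p where p: "\<forall>p'\<in>{c..q}. profit F c q p' \<le> profit F c q p"
    using continuous_attains_sup[OF compact_Icc _ cont] \<open>c < q\<close> by auto
  have "profit F c q p \<ge> 0"
    using p[rule_format, of c] \<open>c < q\<close> by (simp add: profit_def)
  moreover have "profit F c q p' \<le> 0" if "p' \<notin> {c..q}" for p'
    using that profit_pos_iff[OF cdf, of q c p'] \<open>c < q\<close> \<open>0 < c\<close> by auto
  ultimately have "\<forall>p'. profit F c q p' \<le> profit F c q p"
    using p by (meson order_trans)
  then show thesis by (rule that)
qed

lemma profit_max_first_order: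
  assumes cdf: "is_cdf_with_density F f" and "q > 0" "c < p" "p < q" "0 < c"
    and max: "\<forall>p'. profit F c q p' \<le> profit F c q p"
  shows "virt_val F f (p/q) = c/q"
proof -
  have "p/q \<in> {0<..<1}" using assms by simp
  then have dF: "(F has_real_derivative f (p/q)) (at (p/q))" and "f (p/q) > 0"
    using cdf by (auto simp: is_cdf_with_density_def)
  have "((\<lambda>x. F (x/q)) has_real_derivative f (p/q) * (1/q)) (at p)"
    using \<open>q > 0\<close>
    by (intro DERIV_chain2[where g = "\<lambda>x. x/q", OF dF]) (auto intro!: derivative_eq_intros)
  then have "(profit F c q has_real_derivative
      (p - c) * (0 - f (p/q) * (1/q)) + 1 * (1 - F (p/q))) (at p)"
    unfolding profit_def[abs_def] by (auto intro!: derivative_eq_intros)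
  then have "(p - c) * (0 - f (p/q) * (1/q)) + 1 * (1 - F (p/q)) = 0"
    using max by (intro DERIV_local_max[of _ _ _ 1]) auto
  with \<open>f (p/q) > 0\<close> \<open>q > 0\<close> have "hazard_inv F f (p/q) = (p - c) / q"
    by (simp add: hazard_inv_def field_simps)
  then show ?thesis
    using \<open>q > 0\<close> by (simp add: virt_val_def diff_divide_distrib)
qed

lemma virt_val_has_deriv:
  assumes cdf: "is_cdf_with_density F f" and C2: "C2_on_open f {0<..<1}"
    and v: "v \<in> {0<..<1}"
  shows "(virt_val F f has_real_derivative deriv (virt_val F f) v) (at v)"
proof -
  obtain f1 where "(f has_real_derivative f1 v) (at v)"
    using C2 v unfolding C2_on_open_def by blast
  moreover have "(F has_real_derivative f v) (at v)" and "f v > 0"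
    using cdf v by (auto simp: is_cdf_with_density_def)
  ultimately have "((\<lambda>v. v - (1 - F v) / f v) has_real_derivative
      1 - ((0 - f v) * f v - (1 - F v) * f1 v) / (f v * f v)) (at v)"
    by (intro derivative_intros) auto
  then have "virt_val F f differentiable (at v)"
    unfolding virt_val_def[abs_def] hazard_inv_def real_differentiable_def by blast
  then show ?thesis by (simp add: DERIV_deriv_iff_real_differentiable)
qed

lemma virt_val_pos_level_unique:
  assumes cdf: "is_cdf_with_density F f" and C2: "C2_on_open f {0<..<1}"
    and mono: "\<forall>v\<in>{0<..<1}. virt_val F f v > 0 \<longrightarrow> deriv (virt_val F f) v > 0"
    and v: "v \<in> {0<..<1}" "w \<in> {0<..<1}" and "k > 0"
    and eq: "virt_val F f v = k" "virt_val F f w = k"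
  shows "v = w"
proof -
  have "a = b" if "a \<le> b" "a \<in> {0<..<1}" "b \<in> {0<..<1}"
    "virt_val F f a = k" "virt_val F f b = k" for a b
  proof (rule level_attained_once[where g = "virt_val F f" and k = k])
    fix x assume "x \<in> {a..b}"
    with that have x: "x \<in> {0<..<1}" by auto
    show "(virt_val F f has_real_derivative deriv (virt_val F f) x) (at x)"
      by (rule virt_val_has_deriv[OF cdf C2 x])
    show "virt_val F f x \<ge> k \<Longrightarrow> deriv (virt_val F f) x > 0"
      using mono x \<open>k > 0\<close> by auto
  qed (use that in auto)
  with v eq show ?thesis by (metis linear)
qed

lemma opt_price_maximizes:
  assumes cdf: "is_cdf_with_density F f" and C2: "C2_on_open f {0<..<1}"
    and mono: "\<forall>v\<in>{0<..<1}. virt_val F f v > 0 \<longrightarrow> deriv (virt_val F f) v > 0"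
    and "0 < c" "c < q"
  shows "c < opt_price F c q" "opt_price F c q < q"
    and "profit F c q p \<le> profit F c q (opt_price F c q)"
proof -
  have "q > 0" using assms by simp
  define is_max where "is_max p \<longleftrightarrow> (\<forall>p'. profit F c q p' \<le> profit F c q p)" for p
  have inside: "c < p \<and> p < q" if "is_max p" for p
  proof -
    have "0 < profit F c q ((c + q) / 2)"
      using profit_pos_iff[OF cdf \<open>q > 0\<close>] \<open>c < q\<close> by simp
    also have "\<dots> \<le> profit F c q p" using that by (simp add: is_max_def)
    finally show ?thesis using profit_pos_iff[OF cdf \<open>q > 0\<close>] by simp
  qed
  have unique: "p = p'" if "is_max p" "is_max p'" for p p'
  proof -
    have "virt_val F f (p/q) = c/q" "virt_val F f (p'/q) = c/q"
      using profit_max_first_order[OF cdf \<open>q > 0\<close>] inside that \<open>0 < c\<close>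
      unfolding is_max_def by auto
    moreover have "p/q \<in> {0<..<1}" "p'/q \<in> {0<..<1}"
      using inside[OF that(1)] inside[OF that(2)] \<open>0 < c\<close> by auto
    moreover have "c/q > 0" using \<open>0 < c\<close> \<open>q > 0\<close> by simp
    ultimately have "p/q = p'/q"
      by (metis virt_val_pos_level_unique[OF cdf C2 mono])
    with \<open>q > 0\<close> show ?thesis by simp
  qed
  obtain p0 where "is_max p0"
    using profit_attains_max[OF cdf \<open>0 < c\<close> \<open>c < q\<close>] unfolding is_max_def by blast
  have strict: "profit F c q p' < profit F c q p0" if "p' \<noteq> p0" for p'
  proof (rule ccontr)
    assume "\<not> ?thesis"
    then have "profit F c q p0 \<le> profit F c q p'" by simp
    with \<open>is_max p0\<close> have "is_max p'" unfolding is_max_def by (meson order_trans)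
    with \<open>is_max p0\<close> unique that show False by blast
  qed
  have "opt_price F c q = p0"
    unfolding opt_price_def
  proof (rule the_equality)
    fix p assume p_max: "\<forall>p'. p' \<noteq> p \<longrightarrow> profit F c q p' < profit F c q p"
    show "p = p0"
    proof (rule ccontr)
      assume "p \<noteq> p0"
      with strict p_max show False by (metis less_asym)
    qed
  qed (use strict in blast)
  with \<open>is_max p0\<close> inside show "c < opt_price F c q" "opt_price F c q < q"
    and "profit F c q p \<le> profit F c q (opt_price F c q)"
    by (auto simp: is_max_def)
qed

lemma profit_rescaled_price_gt:
  assumes cdf: "is_cdf_with_density F f" and "0 < q" "q < q'" "0 < c" "c < p" "p < q"
  shows "profit F c q p < profit F c q' (p * q' / q)"
proof -
  have "F (p/q) < 1" using cdf_less_one[OF cdf] assms by simp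
  moreover have "p < p * q' / q" using assms by (simp add: field_simps)
  ultimately have "(p - c) * (1 - F (p/q)) < (p * q' / q - c) * (1 - F (p/q))"
    by (intro mult_strict_right_mono) auto
  with assms show ?thesis by (simp add: profit_def)
qed

theorem lemma14:
  fixes F f :: "real \<Rightarrow> real" and ql qh c :: real
  assumes "0 < ql" and "ql < qh"
    and "0 < c" and "c < ql"
    and "is_cdf_with_density F f"
    and "C2_on_open f {0<..<1}"
    and "\<forall>v\<in>{0<..<1}. virt_val F f v > 0 \<longrightarrow> deriv (virt_val F f) v > 0"
  shows "strict_mono_on {ql..qh} (\<lambda>q. (opt_price F c q - c) * (1 - F (opt_price F c q / q)))"
proof (rule strict_mono_onI)
  fix q q' assume "q \<in> {ql..qh}" "q' \<in> {ql..qh}" "q < q'"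
  then have "0 < q" "c < q" "c < q'" using assms by auto
  note opt = opt_price_maximizes[OF assms(5-7) \<open>0 < c\<close>]
  let ?p = "opt_price F c q"
  have "profit F c q ?p < profit F c q' (?p * q' / q)"
    using profit_rescaled_price_gt[OF assms(5) \<open>0 < q\<close> \<open>q < q'\<close> \<open>0 < c\<close>] opt[OF \<open>c < q\<close>]
    by blast
  also have "\<dots> \<le> profit F c q' (opt_price F c q')"
    by (rule opt(3)[OF \<open>c < q'\<close>])
  finally show "(?p - c) * (1 - F (?p / q))
      < (opt_price F c q' - c) * (1 - F (opt_price F c q' / q'))"
    by (simp add: profit_def)
qed

end
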